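(* Let $M$ be a finite item set, $n\ge1$, and $v$ a normalized monotone valuation on $M$. (1) If $v$ is subadditive, then $\mathrm{RMMS}(M,v,n)\ge \frac1n\,\mathrm{MMS}(M,v,n)$. (2) If $v$ is additive, then $\mathrm{RMMS}(M,v,n)\ge \rho_n\,\mathrm{MMS}(M,v,n)$, where $\rho_n=\frac{2n}{3n-1}$ for odd $n$ and $\rho_n=\frac{2n-2}{3n-4}$ for even $n$; in particular $\mathrm{RMMS}(M,v,n)\ge\frac23\,\mathrm{MMS}(M,v,n)$.
   Context: A valuation is a function $v:2^M\to\mathbb{R}_{\ge0}$ that is normalized ($v(\emptyset)=0$) and monotone. It is additive if $v(S)=\sum_{e\in S}v(\{e\})$ for all $S$, and subadditive if $v(S)+v(T)\ge v(S\cup T)$ for all $S,T\subseteq M$. $\mathrm{MMS}(M,v,n)$ is the maximum, over all partitions $P_1,\dots,P_n$ of $M$ into $n$ (possibly empty) parts, of $\min_j v(P_j)$. Residual maximin share: $\mathrm{RMMS}(M,v,n)$ is the largest real $t$ with the following property: for every $0\le k<n$ and every $k$ pairwise disjoint bundles $B_1,\dots,B_k\subseteq M$ with $v(B_j)<t$ for all $j$, the set $M\setminus(B_1\cup\dots\cup B_k)$ can be partitioned into $n-k$ bundles each of value (under $v$) at least $t$. *)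

theory Defs
  imports Main "HOL.Real"
begin

definition valuation :: "'a set \<Rightarrow> ('a set \<Rightarrow> real) \<Rightarrow> bool" where
  "valuation M v \<longleftrightarrow> v {} = 0 \<and> (\<forall>S. S \<subseteq> M \<longrightarrow> v S \<ge> 0)
     \<and> (\<forall>S T. S \<subseteq> T \<longrightarrow> T \<subseteq> M \<longrightarrow> v S \<le> v T)"

definition additive_val :: "'a set \<Rightarrow> ('a set \<Rightarrow> real) \<Rightarrow> bool" where
  "additive_val M v \<longleftrightarrow> (\<forall>S. S \<subseteq> M \<longrightarrow> v S = (\<Sum>e\<in>S. v {e}))"

definition subadditive_val :: "'a set \<Rightarrow> ('a set \<Rightarrow> real) \<Rightarrow> bool" where
  "subadditive_val M v \<longleftrightarrow> (\<forall>S T. S \<subseteq> M \<longrightarrow> T \<subseteq> M \<longrightarrow> v S + v T \<ge> v (S \<union> T))"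

definition is_partition :: "'a set \<Rightarrow> nat \<Rightarrow> (nat \<Rightarrow> 'a set) \<Rightarrow> bool" where
  "is_partition S n P \<longleftrightarrow> (\<Union>j<n. P j) = S \<and> (\<forall>i<n. \<forall>j<n. i \<noteq> j \<longrightarrow> P i \<inter> P j = {})"

definition MMS :: "'a set \<Rightarrow> ('a set \<Rightarrow> real) \<Rightarrow> nat \<Rightarrow> real" where
  "MMS M v n = Sup {Min ((\<lambda>j. v (P j)) ` {..<n}) | P. is_partition M n P}"

definition RMMS_prop :: "'a set \<Rightarrow> ('a set \<Rightarrow> real) \<Rightarrow> nat \<Rightarrow> real \<Rightarrow> bool" where
  "RMMS_prop M v n t \<longleftrightarrow>
     (\<forall>k<n. \<forall>B :: nat \<Rightarrow> 'a set.
        (\<forall>j<k. B j \<subseteq> M) \<and> (\<forall>i<k. \<forall>j<k. i \<noteq> j \<longrightarrow> B i \<inter> B j = {}) \<and> (\<forall>j<k. v (B j) < t)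
        \<longrightarrow> (\<exists>P. is_partition (M - (\<Union>j<k. B j)) (n - k) P \<and> (\<forall>j<n - k. v (P j) \<ge> t)))"

text \<open>The largest t with the property (the property is downward closed and bounded, so this is its supremum).\<close>
definition RMMS :: "'a set \<Rightarrow> ('a set \<Rightarrow> real) \<Rightarrow> nat \<Rightarrow> real" where
  "RMMS M v n = Sup {t. RMMS_prop M v n t}"

definition rho :: "nat \<Rightarrow> real" where
  "rho n = (if odd n then 2 * real n / (3 * real n - 1) else (2 * real n - 2) / (3 * real n - 4))"

end

theory Submission
  imports Defs "HOL-Library.Disjoint_Sets"
begin

text \<open>Fix a partition \<open>Q\<close> of \<open>M\<close> into \<open>n\<close> parts worth at least \<open>\<mu>\<close> each and remove
  \<open>k < n\<close> disjoint bundles worth less than \<open>t\<close> each. By subadditivity their union \<open>U\<close> is worth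
  at most \<open>k * t\<close>, and nothing else about the bundles is used.

  For subadditive \<open>v\<close> and \<open>t = \<mu> / n\<close>, every piece \<open>Q i - U\<close> is still worth at least
  \<open>\<mu> - (n - 1) * t = t\<close>, so the pieces can be grouped into \<open>n - k\<close> bundles worth at least \<open>t\<close>.

  For additive \<open>v\<close> and \<open>t = rho n * \<mu>\<close>, the deficits \<open>\<mu> - v (Q i - U)\<close> add up to at most
  \<open>v U \<le> k * t\<close>. Merging two pieces whose union is still worth less than \<open>t\<close> lowers the total
  deficit by \<open>\<mu> \<ge> t\<close>. Once no such pair is left, any two light pieces form a bundle, and the
  choice of \<open>rho n\<close> ensures that a deficit budget of \<open>K * t\<close> admits at most \<open>2 * K\<close> light
  pieces, so pairing them loses at most \<open>K\<close> bundles.\<close>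

lemma is_partition_iff_disjoint_family:
  "is_partition S n P \<longleftrightarrow> (\<Union>j<n. P j) = S \<and> disjoint_family_on P {..<n}"
  by (auto simp: is_partition_def disjoint_family_on_def)

lemma is_partition_subset: "is_partition S n P \<Longrightarrow> j < n \<Longrightarrow> P j \<subseteq> S"
  by (auto simp: is_partition_def)

lemma is_partition_single: "is_partition S (Suc 0) (\<lambda>_. S)"
  by (auto simp: is_partition_def)

lemma is_partition_fun_upd:
  assumes "is_partition S m P" "Y \<inter> S = {}"
  shows "is_partition (S \<union> Y) (Suc m) (P(m := Y))"
  using assms by (fastforce simp: is_partition_def lessThan_Suc less_Suc_eq)

lemma is_partition_Diff:
  "is_partition S n P \<Longrightarrow> is_partition (S - U) n (\<lambda>j. P j - U)"
  by (auto simp: is_partition_def)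

lemma valuation_mono: "valuation M v \<Longrightarrow> S \<subseteq> T \<Longrightarrow> T \<subseteq> M \<Longrightarrow> v S \<le> v T"
  by (simp add: valuation_def)

lemma valuation_nonneg: "valuation M v \<Longrightarrow> S \<subseteq> M \<Longrightarrow> 0 \<le> v S"
  by (simp add: valuation_def)

lemma additive_val_Un:
  assumes "additive_val M v" "finite M" "S \<subseteq> M" "T \<subseteq> M" "S \<inter> T = {}"
  shows "v (S \<union> T) = v S + v T"
proof -
  have "finite S" "finite T" using assms(2-4) by (auto intro: finite_subset)
  with assms show ?thesis
    unfolding additive_val_def by (simp add: sum.union_disjoint)
qed

lemma additive_val_imp_subadditive_val:
  assumes "valuation M v" "additive_val M v" "finite M"
  shows "subadditive_val M v"
  unfolding subadditive_val_def
proof (intro allI impI)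
  fix S T assume "S \<subseteq> M" "T \<subseteq> M"
  then have "v (S \<union> T) = v S + v (T - S)"
    using additive_val_Un[OF assms(2,3)] by (metis Diff_disjoint Diff_subset Un_Diff_cancel order_trans)
  also have "\<dots> \<le> v S + v T"
    using valuation_mono[OF assms(1)] \<open>T \<subseteq> M\<close> by simp
  finally show "v (S \<union> T) \<le> v S + v T" .
qed

lemma additive_val_UN:
  assumes "additive_val M v" "finite M" "finite I" "\<forall>i\<in>I. Y i \<subseteq> M" "disjoint_family_on Y I"
  shows "v (\<Union>i\<in>I. Y i) = (\<Sum>i\<in>I. v (Y i))"
proof -
  have "v (\<Union>i\<in>I. Y i) = (\<Sum>e\<in>(\<Union>i\<in>I. Y i). v {e})"
    using assms(1,4) unfolding additive_val_def by blast
  also have "\<dots> = (\<Sum>i\<in>I. \<Sum>e\<in>Y i. v {e})"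
    using assms(2-5) by (intro sum.UNION_disjoint) (auto intro: finite_subset simp: disjoint_family_on_def)
  also have "\<dots> = (\<Sum>i\<in>I. v (Y i))"
    using assms(1,4) by (intro sum.cong) (auto simp: additive_val_def)
  finally show ?thesis .
qed

lemma subadditive_valD:
  "subadditive_val M v \<Longrightarrow> S \<subseteq> M \<Longrightarrow> T \<subseteq> M \<Longrightarrow> v (S \<union> T) \<le> v S + v T"
  by (simp add: subadditive_val_def)

lemma subadditive_val_UN:
  assumes "subadditive_val M v" "v {} = 0" "finite I" "\<forall>i\<in>I. Y i \<subseteq> M"
  shows "v (\<Union>i\<in>I. Y i) \<le> (\<Sum>i\<in>I. v (Y i))"
  using assms(3,4)
proof (induction I rule: finite_induct)
  case empty
  then show ?case using assms(2) by simp
next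
  case (insert i I)
  have "v (Y i \<union> (\<Union>j\<in>I. Y j)) \<le> v (Y i) + v (\<Union>j\<in>I. Y j)"
    using insert.prems by (intro subadditive_valD[OF assms(1)]) auto
  also have "\<dots> \<le> v (Y i) + (\<Sum>j\<in>I. v (Y j))"
    using insert by simp
  finally show ?case using insert.hyps by simp
qed

definition pair_bundle_count :: "('a set \<Rightarrow> real) \<Rightarrow> real \<Rightarrow> ('i \<Rightarrow> 'a set) \<Rightarrow> 'i set \<Rightarrow> nat" where
  "pair_bundle_count v t X I = card {i\<in>I. t \<le> v (X i)} + card {i\<in>I. v (X i) < t} div 2"

lemma obtain_heavy_bundle:
  assumes "finite I" "1 \<le> pair_bundle_count v t X I"
    and light_pairs: "\<And>i j. i \<in> I \<Longrightarrow> j \<in> I \<Longrightarrow> i \<noteq> j \<Longrightarrow> v (X i) < t \<Longrightarrow> v (X j) < t \<Longrightarrow> t \<le> v (X i \<union> X j)"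
  obtains J where "J \<subseteq> I" "t \<le> v (\<Union>i\<in>J. X i)"
    "pair_bundle_count v t X (I - J) = pair_bundle_count v t X I - 1"
proof (cases "\<exists>i\<in>I. t \<le> v (X i)")
  case True
  then obtain i where i: "i \<in> I" "t \<le> v (X i)" by blast
  have "{l\<in>I - {i}. t \<le> v (X l)} = {l\<in>I. t \<le> v (X l)} - {i}"
    "{l\<in>I - {i}. v (X l) < t} = {l\<in>I. v (X l) < t}" using i by auto
  moreover have "1 \<le> card {l\<in>I. t \<le> v (X l)}"
    using i assms(1) by (auto simp: Suc_le_eq card_gt_0_iff)
  ultimately have "pair_bundle_count v t X (I - {i}) = pair_bundle_count v t X I - 1"
    using i assms(1) by (simp add: pair_bundle_count_def)
  then show thesis using that[of "{i}"] i by simp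
next
  case False
  then have no_heavy: "{l\<in>I. t \<le> v (X l)} = {}" by auto
  have "2 \<le> card {l\<in>I. v (X l) < t}"
    using assms(2) unfolding pair_bundle_count_def no_heavy by simp
  then obtain i j where ij: "i \<in> I" "j \<in> I" "i \<noteq> j" "v (X i) < t" "v (X j) < t"
    by (auto simp: numeral_2_eq_2 card_le_Suc_iff)
  have "{l\<in>I - {i, j}. t \<le> v (X l)} = {l\<in>I. t \<le> v (X l)}"
    "{l\<in>I - {i, j}. v (X l) < t} = {l\<in>I. v (X l) < t} - {i, j}" using no_heavy ij by auto
  then have "pair_bundle_count v t X (I - {i, j}) = pair_bundle_count v t X I - 1"
    using ij assms(1) \<open>2 \<le> _\<close> by (simp add: pair_bundle_count_def card_Diff_subset)
  then show thesis using that[of "{i, j}"] ij light_pairs by simp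
qed

lemma heavy_bundle_partition:
  assumes "valuation M v" "finite I" "\<forall>i\<in>I. X i \<subseteq> M" "disjoint_family_on X I"
    and light_pairs: "\<And>i j. i \<in> I \<Longrightarrow> j \<in> I \<Longrightarrow> i \<noteq> j \<Longrightarrow> v (X i) < t \<Longrightarrow> v (X j) < t \<Longrightarrow> t \<le> v (X i \<union> X j)"
    and "1 \<le> T" "T \<le> pair_bundle_count v t X I"
  shows "\<exists>P. is_partition (\<Union>i\<in>I. X i) T P \<and> (\<forall>j<T. t \<le> v (P j))"
  using assms(2-)
proof (induction T arbitrary: I)
  case 0
  then show ?case by simp
next
  case (Suc T)
  obtain J where J: "J \<subseteq> I" "t \<le> v (\<Union>i\<in>J. X i)"
    "pair_bundle_count v t X (I - J) = pair_bundle_count v t X I - 1"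
    using obtain_heavy_bundle[of I v t X] Suc.prems by auto
  show ?case
  proof (cases "T = 0")
    case True
    have "t \<le> v (\<Union>i\<in>I. X i)"
      using J Suc.prems(2) valuation_mono[OF assms(1)] by (meson UN_mono UN_least order.trans order_refl)
    then show ?thesis using True is_partition_single by blast
  next
    case False
    have "\<exists>P. is_partition (\<Union>i\<in>I - J. X i) T P \<and> (\<forall>j<T. t \<le> v (P j))"
      using Suc.prems False J(3) by (intro Suc.IH) (auto simp: disjoint_family_on_def)
    then obtain P where P: "is_partition (\<Union>i\<in>I - J. X i) T P" "\<forall>j<T. t \<le> v (P j)"
      by blast
    have "(\<Union>i\<in>J. X i) \<inter> (\<Union>i\<in>I - J. X i) = {}"
      using disjoint_family_onD[OF Suc.prems(3)] J(1) by blast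
    then have "is_partition ((\<Union>i\<in>I - J. X i) \<union> (\<Union>i\<in>J. X i)) (Suc T) (P(T := \<Union>i\<in>J. X i))"
      by (intro is_partition_fun_upd P(1)) blast
    moreover have "(\<Union>i\<in>I - J. X i) \<union> (\<Union>i\<in>J. X i) = (\<Union>i\<in>I. X i)" using J(1) by blast
    ultimately show ?thesis using P(2) J(2) by (metis fun_upd_apply less_Suc_eq)
  qed
qed

lemma RMMS_propI:
  assumes "subadditive_val M v" "v {} = 0"
    and residual: "\<And>k U. k < n \<Longrightarrow> U \<subseteq> M \<Longrightarrow> v U \<le> real k * t \<Longrightarrow>
      \<exists>P. is_partition (M - U) (n - k) P \<and> (\<forall>j<n - k. t \<le> v (P j))"
  shows "RMMS_prop M v n t"
  unfolding RMMS_prop_def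
proof (intro allI impI)
  fix k and B :: "nat \<Rightarrow> 'a set"
  assume k: "k < n" and B: "(\<forall>j<k. B j \<subseteq> M) \<and> (\<forall>i<k. \<forall>j<k. i \<noteq> j \<longrightarrow> B i \<inter> B j = {}) \<and> (\<forall>j<k. v (B j) < t)"
  have "v (\<Union>j<k. B j) \<le> (\<Sum>j<k. v (B j))"
    using B by (intro subadditive_val_UN[OF assms(1,2)]) auto
  also have "\<dots> \<le> (\<Sum>j<k. t)"
    using B by (intro sum_mono) (simp add: less_imp_le)
  finally show "\<exists>P. is_partition (M - (\<Union>j<k. B j)) (n - k) P \<and> (\<forall>j<n - k. t \<le> v (P j))"
    using k B by (intro residual) auto
qed

lemma RMMS_propD:
  assumes "RMMS_prop M v n t" "k < n" "\<forall>j<k. B j \<subseteq> M" "\<forall>i<k. \<forall>j<k. i \<noteq> j \<longrightarrow> B i \<inter> B j = {}"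
    "\<forall>j<k. v (B j) < t"
  shows "\<exists>P. is_partition (M - (\<Union>j<k. B j)) (n - k) P \<and> (\<forall>j<n - k. t \<le> v (P j))"
  using assms unfolding RMMS_prop_def by blast

lemma RMMS_prop_mono:
  assumes "RMMS_prop M v n t" "s \<le> t"
  shows "RMMS_prop M v n s"
  unfolding RMMS_prop_def
proof (intro allI impI)
  fix k and B :: "nat \<Rightarrow> 'a set"
  assume "k < n" and B: "(\<forall>j<k. B j \<subseteq> M) \<and> (\<forall>i<k. \<forall>j<k. i \<noteq> j \<longrightarrow> B i \<inter> B j = {}) \<and> (\<forall>j<k. v (B j) < s)"
  moreover have "\<forall>j<k. v (B j) < t" using B assms(2) by auto
  ultimately obtain P where "is_partition (M - (\<Union>j<k. B j)) (n - k) P" "\<forall>j<n - k. t \<le> v (P j)"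
    using RMMS_propD[OF assms(1), of k B] by auto
  then show "\<exists>P. is_partition (M - (\<Union>j<k. B j)) (n - k) P \<and> (\<forall>j<n - k. s \<le> v (P j))"
    using assms(2) by force
qed

lemma RMMS_prop_le_RMMS:
  assumes "valuation M v" "1 \<le> n" "RMMS_prop M v n t"
  shows "t \<le> RMMS M v n"
  unfolding RMMS_def
proof (rule cSup_upper)
  show "bdd_above {t. RMMS_prop M v n t}"
  proof (rule bdd_aboveI)
    fix s assume "s \<in> {t. RMMS_prop M v n t}"
    then obtain P where P: "is_partition M n P" "\<forall>j<n. s \<le> v (P j)"
      using RMMS_propD[of M v n s 0] assms(2) by auto
    have "P 0 \<subseteq> M" using P(1) assms(2) by (simp add: is_partition_subset)
    then show "s \<le> v M"
      using P(2) assms(2) valuation_mono[OF assms(1), of "P 0" M] by force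
  qed
qed (use assms(3) in simp)

lemma MMS_scaled_le_RMMS:
  assumes "valuation M v" "1 \<le> n" "0 < c"
    and scaled: "\<And>Q \<mu>. is_partition M n Q \<Longrightarrow> 0 \<le> \<mu> \<Longrightarrow> \<forall>j<n. \<mu> \<le> v (Q j) \<Longrightarrow> RMMS_prop M v n (c * \<mu>)"
  shows "c * MMS M v n \<le> RMMS M v n"
proof -
  let ?S = "{Min ((\<lambda>j. v (P j)) ` {..<n}) | P. is_partition M n P}"
  have "is_partition M n (\<lambda>j. if j = 0 then M else {})"
    using assms(2) by (auto simp: is_partition_def)
  then have "?S \<noteq> {}" by blast
  moreover have "c * x \<le> RMMS M v n" if "x \<in> ?S" for x
  proof -
    obtain Q where Q: "is_partition M n Q" and x: "x = Min ((\<lambda>j. v (Q j)) ` {..<n})"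
      using \<open>x \<in> ?S\<close> by blast
    have Qvals: "finite ((\<lambda>j. v (Q j)) ` {..<n})" "(\<lambda>j. v (Q j)) ` {..<n} \<noteq> {}"
      using assms(2) by (auto simp: lessThan_empty_iff)
    have "\<forall>j<n. x \<le> v (Q j)" using x Qvals by simp
    moreover obtain j where "j < n" "x = v (Q j)" using Min_in[OF Qvals] x by auto
    then have "0 \<le> x" using valuation_nonneg[OF assms(1) is_partition_subset[OF Q]] by simp
    ultimately show ?thesis using scaled[OF Q] by (intro RMMS_prop_le_RMMS[OF assms(1,2)])
  qed
  ultimately have "MMS M v n \<le> RMMS M v n / c"
    unfolding MMS_def using assms(3) by (intro cSup_least) (auto simp: pos_le_divide_eq mult.commute)
  then show ?thesis using assms(3) by (simp add: pos_le_divide_eq mult.commute)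
qed

lemma RMMS_prop_subadditive:
  assumes "valuation M v" "subadditive_val M v" "is_partition M n Q" "1 \<le> n"
    and "0 \<le> \<mu>" "\<forall>j<n. \<mu> \<le> v (Q j)"
  shows "RMMS_prop M v n (\<mu> / n)"
proof (rule RMMS_propI[OF assms(2)])
  show "v {} = 0" using assms(1) by (simp add: valuation_def)
  fix k U assume k: "k < n" and U: "U \<subseteq> M" "v U \<le> real k * (\<mu> / n)"
  have "real k * (\<mu> / n) \<le> (real n - 1) * (\<mu> / n)"
    using k assms(5) by (intro mult_right_mono) auto
  then have vU: "v U \<le> \<mu> - \<mu> / n" using U(2) assms(4) by (simp add: field_simps)
  have residual: "is_partition (M - U) n (\<lambda>i. Q i - U)"
    using assms(3) by (rule is_partition_Diff)
  have heavy: "\<mu> / n \<le> v (Q i - U)" if "i < n" for i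
  proof -
    have "Q i \<subseteq> M" using assms(3) that by (rule is_partition_subset)
    have "\<mu> \<le> v (Q i)" using assms(6) that by simp
    also have "\<dots> \<le> v ((Q i - U) \<union> U)"
      using U(1) \<open>Q i \<subseteq> M\<close> valuation_mono[OF assms(1)] by simp
    also have "\<dots> \<le> v (Q i - U) + v U"
      using U(1) \<open>Q i \<subseteq> M\<close> by (intro subadditive_valD[OF assms(2)]) auto
    finally show ?thesis using vU by linarith
  qed
  have not_light: "\<not> v (Q i - U) < \<mu> / n" if "i < n" for i
    using heavy[OF that] by simp
  have all_heavy: "{i\<in>{..<n}. \<mu> / n \<le> v (Q i - U)} = {..<n}"
    and no_light: "{i\<in>{..<n}. v (Q i - U) < \<mu> / n} = {}"
    using heavy not_light by auto
  have "pair_bundle_count v (\<mu> / n) (\<lambda>i. Q i - U) {..<n} = n"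
    unfolding pair_bundle_count_def all_heavy no_light by simp
  then have "\<exists>P. is_partition (\<Union>i<n. Q i - U) (n - k) P \<and> (\<forall>j<n - k. \<mu> / n \<le> v (P j))"
    using residual assms(3) k not_light
    by (intro heavy_bundle_partition[OF assms(1)])
      (auto simp: is_partition_iff_disjoint_family dest: is_partition_subset)
  then show "\<exists>P. is_partition (M - U) (n - k) P \<and> (\<forall>j<n - k. \<mu> / n \<le> v (P j))"
    using residual by (simp add: is_partition_def)
qed

lemma sum_Diff_fun_upd:
  fixes g :: "'b \<Rightarrow> 'c::ab_group_add"
  assumes "finite I" "i \<in> I" "j \<in> I" "i \<noteq> j"
  shows "(\<Sum>l\<in>I - {j}. g ((X(i := Y)) l)) = (\<Sum>l\<in>I. g (X l)) - g (X i) - g (X j) + g Y"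
proof -
  have "(\<Sum>l\<in>I - {j}. g ((X(i := Y)) l)) = g Y + (\<Sum>l\<in>I - {j} - {i}. g (X l))"
    using assms by (simp add: sum.remove[of "I - {j}" i])
  also have "(\<Sum>l\<in>I - {j} - {i}. g (X l)) = (\<Sum>l\<in>I. g (X l)) - g (X j) - g (X i)"
    using assms by (simp add: sum_diff1 algebra_simps)
  finally show ?thesis by (simp add: algebra_simps)
qed

lemma disjoint_family_on_merge:
  "disjoint_family_on X I \<Longrightarrow> i \<in> I \<Longrightarrow> j \<in> I \<Longrightarrow> disjoint_family_on (X(i := X i \<union> X j)) (I - {j})"
  unfolding disjoint_family_on_def by auto

lemma deficit_sum_merge:
  assumes "valuation M v" "additive_val M v" "finite M" "finite I" "i \<in> I" "j \<in> I" "i \<noteq> j"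
    and "X i \<subseteq> M" "X j \<subseteq> M" "X i \<inter> X j = {}" "v (X i) + v (X j) < \<mu>"
  shows "(\<Sum>l\<in>I - {j}. max 0 (\<mu> - v ((X(i := X i \<union> X j)) l)))
    = (\<Sum>l\<in>I. max 0 (\<mu> - v (X l))) - \<mu>"
proof -
  have "0 \<le> v (X i)" "0 \<le> v (X j)" using assms(8,9) valuation_nonneg[OF assms(1)] by auto
  moreover have "v (X i \<union> X j) = v (X i) + v (X j)"
    using assms(8-10) by (rule additive_val_Un[OF assms(2,3)])
  ultimately show ?thesis
    using sum_Diff_fun_upd[OF assms(4-7), of "\<lambda>Y. max 0 (\<mu> - v Y)" X] assms(11) by simp
qed

lemma card_light_pieces_le:
  assumes "finite I" "card I \<le> n" "(\<Sum>i\<in>I. max 0 (\<mu> - v (X i))) \<le> real K * t"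
    and pairing: "\<And>b K. 2 * K < b \<Longrightarrow> b \<le> n \<Longrightarrow> real K * t \<le> real b * (\<mu> - t)"
  shows "card {i\<in>I. v (X i) < t} \<le> 2 * K"
proof (rule ccontr)
  let ?L = "{i\<in>I. v (X i) < t}"
  assume "\<not> card ?L \<le> 2 * K"
  then have "?L \<noteq> {}" by (metis card.empty zero_le)
  have "real K * t \<le> real (card ?L) * (\<mu> - t)"
    using \<open>\<not> card ?L \<le> 2 * K\<close> assms(1,2) card_mono[of I ?L] by (intro pairing) auto
  also have "\<dots> = (\<Sum>i\<in>?L. \<mu> - t)" by simp
  also have "\<dots> < (\<Sum>i\<in>?L. max 0 (\<mu> - v (X i)))"
    using assms(1) \<open>?L \<noteq> {}\<close> by (intro sum_strict_mono) auto
  also have "\<dots> \<le> (\<Sum>i\<in>I. max 0 (\<mu> - v (X i)))"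
    using assms(1) by (intro sum_mono2) auto
  finally show False using assms(3) by simp
qed

text \<open>\<open>max 0 (\<mu> - v (X i))\<close> is the deficit of piece \<open>i\<close> against the share \<open>\<mu>\<close>; a merge
  costs one piece but also one unit of the budget \<open>K * t\<close>.\<close>

lemma heavy_bundle_partition_additive:
  assumes "valuation M v" "additive_val M v" "finite M" "0 \<le> t" "t \<le> \<mu>"
    and pairing: "\<And>b K. 2 * K < b \<Longrightarrow> b \<le> n \<Longrightarrow> real K * t \<le> real b * (\<mu> - t)"
  shows "finite I \<Longrightarrow> card I \<le> n \<Longrightarrow> \<forall>i\<in>I. X i \<subseteq> M \<Longrightarrow> disjoint_family_on X I \<Longrightarrow>
    (\<Sum>i\<in>I. max 0 (\<mu> - v (X i))) \<le> real K * t \<Longrightarrow> K < card I \<Longrightarrow>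
    \<exists>P. is_partition (\<Union>i\<in>I. X i) (card I - K) P \<and> (\<forall>j<card I - K. t \<le> v (P j))"
proof (induction "card I" arbitrary: I X K rule: less_induct)
  case less
  show ?case
  proof (cases "\<exists>i\<in>I. \<exists>j\<in>I. i \<noteq> j \<and> v (X i) + v (X j) < t")
    case True
    then obtain i j where ij: "i \<in> I" "j \<in> I" "i \<noteq> j" "v (X i) + v (X j) < t" by blast
    define X' where "X' = X(i := X i \<union> X j)"
    have merged: "(\<Sum>l\<in>I - {j}. max 0 (\<mu> - v (X' l))) = (\<Sum>l\<in>I. max 0 (\<mu> - v (X l))) - \<mu>"
      unfolding X'_def using less.prems(1,3,4) ij assms(5)
      by (intro deficit_sum_merge[OF assms(1-3)]) (auto simp: disjoint_family_onD)
    have "0 < \<mu>"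
      using ij less.prems(3) valuation_nonneg[OF assms(1)] assms(5) by (smt (verit))
    moreover have "0 \<le> (\<Sum>l\<in>I - {j}. max 0 (\<mu> - v (X' l)))"
      by (intro sum_nonneg) simp
    ultimately have "0 < K" using merged less.prems(5) by (cases K) auto
    then have deficit: "(\<Sum>l\<in>I - {j}. max 0 (\<mu> - v (X' l))) \<le> real (K - 1) * t"
      using merged less.prems(5) assms(5) by (simp add: of_nat_diff algebra_simps)
    have "disjoint_family_on X' (I - {j})"
      unfolding X'_def using less.prems(4) ij(1,2) by (rule disjoint_family_on_merge)
    moreover have "\<forall>l\<in>I - {j}. X' l \<subseteq> M" using less.prems(3) ij unfolding X'_def by auto
    ultimately have "\<exists>P. is_partition (\<Union>l\<in>I - {j}. X' l) (card (I - {j}) - (K - 1)) P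
        \<and> (\<forall>l<card (I - {j}) - (K - 1). t \<le> v (P l))"
      using less.prems ij \<open>0 < K\<close> deficit by (intro less.hyps) (auto simp: card_gt_0_iff)
    moreover have "card (I - {j}) - (K - 1) = card I - K"
      using less.prems(1,6) ij \<open>0 < K\<close> by simp
    moreover have "(\<Union>l\<in>I - {j}. X' l) = (\<Union>l\<in>I. X l)" using ij unfolding X'_def by auto
    ultimately show ?thesis by simp
  next
    case False
    have light_pairs: "t \<le> v (X i \<union> X j)" if "i \<in> I" "j \<in> I" "i \<noteq> j" for i j
      using False that less.prems(3,4)
      by (auto simp: additive_val_Un[OF assms(2,3)] disjoint_family_onD not_less)
    have "card I = card {i\<in>I. t \<le> v (X i)} + card {i\<in>I. v (X i) < t}"
      using less.prems(1) by (subst card_Un_disjoint[symmetric]) (auto intro: arg_cong[where f = card])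
    then have "card I - K \<le> pair_bundle_count v t X I"
      using card_light_pieces_le[where v = v and X = X, OF less.prems(1,2,5) pairing] unfolding pair_bundle_count_def by linarith
    then show ?thesis
      using less.prems light_pairs by (intro heavy_bundle_partition[OF assms(1)]) auto
  qed
qed

lemma rho_ge_two_thirds: "1 \<le> n \<Longrightarrow> 2 / 3 \<le> rho n"
  by (cases "odd n") (auto simp: rho_def field_simps elim: oddE)

text \<open>\<open>rho n\<close> is the minimum of \<open>b / (b + K)\<close> over \<open>2 * K < b \<le> n\<close>.\<close>

lemma rho_mult_le:
  assumes "2 * K < b" "b \<le> n"
  shows "rho n * (real b + real K) \<le> real b"
proof (cases "odd n")
  case True
  have "2 * real n * (real b + real K) \<le> real b * (3 * real n - 1)"
  proof -
    have "real n * (2 * real K) \<le> real n * (real b - 1)"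
      using assms(1) by (intro mult_left_mono) auto
    then show ?thesis using assms(2) by (simp add: algebra_simps)
  qed
  moreover have "0 < 3 * real n - 1" using assms by simp
  ultimately show ?thesis using True by (simp add: rho_def field_simps)
next
  case False
  then have n2: "2 \<le> n" using assms by presburger
  have "(2 * real n - 2) * (real b + real K) \<le> real b * (3 * real n - 4)"
  proof (cases "b = n")
    case True
    then have "2 * K + 2 \<le> b" using assms(1) False by presburger
    then have "(real n - 1) * (2 * real K) \<le> (real n - 1) * (real b - 2)"
      using n2 assms(1) by (intro mult_left_mono) auto
    then show ?thesis using True n2 by (simp add: algebra_simps)
  next
    case False
    have "(real n - 1) * (2 * real K) \<le> (real n - 1) * (real b - 1)"
      using n2 assms(1) by (intro mult_left_mono) auto
    then show ?thesis using False assms(2) by (simp add: algebra_simps)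
  qed
  moreover have "0 < 3 * real n - 4" using n2 by simp
  ultimately show ?thesis using False by (simp add: rho_def field_simps)
qed

lemma rho_le_one: "1 \<le> n \<Longrightarrow> rho n \<le> 1"
  using rho_mult_le[of 0 n n] by simp

lemma RMMS_prop_additive:
  assumes "valuation M v" "additive_val M v" "finite M" "is_partition M n Q" "1 \<le> n"
    and "0 \<le> \<mu>" "\<forall>j<n. \<mu> \<le> v (Q j)"
  shows "RMMS_prop M v n (rho n * \<mu>)"
proof (rule RMMS_propI)
  show "subadditive_val M v" using assms(1-3) by (rule additive_val_imp_subadditive_val)
  show "v {} = 0" using assms(1) by (simp add: valuation_def)
  let ?t = "rho n * \<mu>"
  fix k U assume k: "k < n" and U: "U \<subseteq> M" "v U \<le> real k * ?t"
  have t_nonneg: "0 \<le> ?t" using rho_ge_two_thirds[OF assms(5)] assms(6) by (intro mult_nonneg_nonneg) auto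
  have t_le: "?t \<le> \<mu>" using rho_ge_two_thirds[OF assms(5)] rho_le_one[OF assms(5)] assms(6)
    by (intro mult_left_le_one_le) auto
  have pairing: "real K * ?t \<le> real b * (\<mu> - ?t)" if "2 * K < b" "b \<le> n" for b K
  proof -
    have "rho n * (real b + real K) * \<mu> \<le> real b * \<mu>"
      using rho_mult_le[OF that] assms(6) by (rule mult_right_mono)
    moreover have "real K * ?t = rho n * (real b + real K) * \<mu> - real b * ?t"
      by (simp add: algebra_simps)
    ultimately show ?thesis by (simp add: right_diff_distrib)
  qed
  have residual: "is_partition (M - U) n (\<lambda>i. Q i - U)"
    using assms(4) by (rule is_partition_Diff)
  have "\<forall>i\<in>{..<n}. Q i - U \<subseteq> M" using is_partition_subset[OF assms(4)] by blast
  moreover have "disjoint_family_on (\<lambda>i. Q i - U) {..<n}"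
    using residual by (simp add: is_partition_iff_disjoint_family)
  moreover have "(\<Sum>i<n. max 0 (\<mu> - v (Q i - U))) \<le> real k * ?t"
  proof -
    have "(\<Sum>i<n. max 0 (\<mu> - v (Q i - U))) \<le> (\<Sum>i<n. v (Q i \<inter> U))"
    proof (rule sum_mono)
      fix i assume "i \<in> {..<n}"
      then have "v ((Q i - U) \<union> (Q i \<inter> U)) = v (Q i - U) + v (Q i \<inter> U)"
        using is_partition_subset[OF assms(4)] by (intro additive_val_Un[OF assms(2,3)]) auto
      moreover have "(Q i - U) \<union> (Q i \<inter> U) = Q i" by blast
      moreover have "\<mu> \<le> v (Q i)" using assms(7) \<open>i \<in> {..<n}\<close> by simp
      moreover have "0 \<le> v (Q i \<inter> U)" using U(1) by (intro valuation_nonneg[OF assms(1)]) auto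
      ultimately show "max 0 (\<mu> - v (Q i - U)) \<le> v (Q i \<inter> U)" by simp
    qed
    also have "\<dots> = v (\<Union>i<n. Q i \<inter> U)"
    proof (rule additive_val_UN[OF assms(2,3), symmetric])
      show "disjoint_family_on (\<lambda>i. Q i \<inter> U) {..<n}"
        using assms(4) by (auto simp: is_partition_iff_disjoint_family disjoint_family_on_def)
    qed (use U(1) in auto)
    also have "(\<Union>i<n. Q i \<inter> U) = U"
      using U(1) assms(4) unfolding is_partition_def by blast
    finally show ?thesis using U(2) by linarith
  qed
  ultimately have "\<exists>P. is_partition (\<Union>i<n. Q i - U) (card {..<n} - k) P
      \<and> (\<forall>j<card {..<n} - k. ?t \<le> v (P j))"
    using k by (intro heavy_bundle_partition_additive[OF assms(1-3) t_nonneg t_le pairing]) auto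
  then show "\<exists>P. is_partition (M - U) (n - k) P \<and> (\<forall>j<n - k. ?t \<le> v (P j))"
    using residual by (simp add: is_partition_def)
qed

theorem mainTheorem4:
  fixes M :: "'a set" and v :: "'a set \<Rightarrow> real" and n :: nat
  assumes "finite M" and "n \<ge> 1" and "valuation M v"
  shows "(subadditive_val M v \<longrightarrow> RMMS M v n \<ge> MMS M v n / real n)
       \<and> (additive_val M v \<longrightarrow> RMMS M v n \<ge> rho n * MMS M v n
                              \<and> RMMS M v n \<ge> 2 / 3 * MMS M v n)"
proof (intro conjI impI)
  assume "subadditive_val M v"
  then have "1 / real n * MMS M v n \<le> RMMS M v n"
    using assms RMMS_prop_subadditive[of M v n]
    by (intro MMS_scaled_le_RMMS) auto
  then show "MMS M v n / real n \<le> RMMS M v n" by simp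
next
  assume additive: "additive_val M v"
  show "rho n * MMS M v n \<le> RMMS M v n"
    using assms additive RMMS_prop_additive[of M v n] rho_ge_two_thirds[OF assms(2)]
    by (intro MMS_scaled_le_RMMS) auto
  show "2 / 3 * MMS M v n \<le> RMMS M v n"
  proof (rule MMS_scaled_le_RMMS[OF assms(3,2)])
    fix Q \<mu> assume "is_partition M n Q" "0 \<le> \<mu>" "\<forall>j<n. \<mu> \<le> v (Q j)"
    then show "RMMS_prop M v n (2 / 3 * \<mu>)"
      using RMMS_prop_additive[OF assms(3) additive assms(1)] assms(2)
      by (meson RMMS_prop_mono mult_right_mono rho_ge_two_thirds)
  qed simp
qed

end
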